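(* Let $(A_i,\omega_i)$, $i=1,2$, be baric algebras over $K$ and let $I$ be a two-sided ideal of $A_1\bowtie A_2$ such that $I_1\neq A_1$. Then $I_1$ is a two-sided ideal of $A_1$ if and only if $I_2\subseteq\operatorname{Ker}\omega_2$.
   Context: A baric algebra over a field $K$ is a pair $(A,\omega)$ where $A$ is a (not necessarily associative) $K$-algebra and $\omega:A\to K$ is a nonzero $K$-algebra homomorphism. For baric algebras $(A_1,\omega_1),(A_2,\omega_2)$, $A_1\bowtie A_2$ denotes the vector space $A_1\oplus A_2$ with product $(a_1,a_2)(b_1,b_2)=(a_1b_1+\omega_2(b_2)a_1,\ a_2b_2+\omega_1(b_1)a_2)$. For a subset $I\subseteq A_1\bowtie A_2$, $I_1=\{a_1\in A_1:\exists a_2\in A_2,\ (a_1,a_2)\in I\}$ and $I_2=\{a_2\in A_2:\exists a_1\in A_1,\ (a_1,a_2)\in I\}$ are its coordinate projections. *)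

theory Defs
  imports Main "HOL.Vector_Spaces" "HOL-Library.Product_Plus"
begin

text \<open>A (not necessarily associative) algebra over a field K: the whole type 'a
  is the underlying K-vector space (scalar multiplication sc), with a bilinear product m.\<close>
definition k_algebra :: "('k::field \<Rightarrow> 'a::ab_group_add \<Rightarrow> 'a) \<Rightarrow> ('a \<Rightarrow> 'a \<Rightarrow> 'a) \<Rightarrow> bool" where
  "k_algebra sc m \<longleftrightarrow> vector_space sc
     \<and> (\<forall>x y z. m (x + y) z = m x z + m y z)
     \<and> (\<forall>x y z. m x (y + z) = m x y + m x z)
     \<and> (\<forall>c x y. m (sc c x) y = sc c (m x y))
     \<and> (\<forall>c x y. m x (sc c y) = sc c (m x y))"

definition baric_algebra :: "('k::field \<Rightarrow> 'a::ab_group_add \<Rightarrow> 'a) \<Rightarrow> ('a \<Rightarrow> 'a \<Rightarrow> 'a) \<Rightarrow> ('a \<Rightarrow> 'k) \<Rightarrow> bool" where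
  "baric_algebra sc m w \<longleftrightarrow> k_algebra sc m
     \<and> (\<forall>x y. w (x + y) = w x + w y)
     \<and> (\<forall>c x. w (sc c x) = c * w x)
     \<and> (\<forall>x y. w (m x y) = w x * w y)
     \<and> (\<exists>x. w x \<noteq> 0)"

definition two_sided_ideal :: "('k::field \<Rightarrow> 'a::ab_group_add \<Rightarrow> 'a) \<Rightarrow> ('a \<Rightarrow> 'a \<Rightarrow> 'a) \<Rightarrow> 'a set \<Rightarrow> bool" where
  "two_sided_ideal sc m I \<longleftrightarrow> 0 \<in> I
     \<and> (\<forall>x\<in>I. \<forall>y\<in>I. x + y \<in> I)
     \<and> (\<forall>c. \<forall>x\<in>I. sc c x \<in> I)
     \<and> (\<forall>a. \<forall>x\<in>I. m a x \<in> I \<and> m x a \<in> I)"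

definition prod_scale :: "('k \<Rightarrow> 'a \<Rightarrow> 'a) \<Rightarrow> ('k \<Rightarrow> 'b \<Rightarrow> 'b) \<Rightarrow> 'k \<Rightarrow> 'a \<times> 'b \<Rightarrow> 'a \<times> 'b" where
  "prod_scale sc1 sc2 c p = (sc1 c (fst p), sc2 c (snd p))"

definition bowtie_mult ::
  "('k::field \<Rightarrow> 'a::ab_group_add \<Rightarrow> 'a) \<Rightarrow> ('a \<Rightarrow> 'a \<Rightarrow> 'a) \<Rightarrow> ('a \<Rightarrow> 'k) \<Rightarrow>
   ('k \<Rightarrow> 'b::ab_group_add \<Rightarrow> 'b) \<Rightarrow> ('b \<Rightarrow> 'b \<Rightarrow> 'b) \<Rightarrow> ('b \<Rightarrow> 'k) \<Rightarrow>
   'a \<times> 'b \<Rightarrow> 'a \<times> 'b \<Rightarrow> 'a \<times> 'b" where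
  "bowtie_mult sc1 m1 w1 sc2 m2 w2 p q =
     (m1 (fst p) (fst q) + sc1 (w2 (snd q)) (fst p),
      m2 (snd p) (snd q) + sc2 (w1 (fst q)) (snd p))"

end

theory Submission
  imports Defs
begin

(* The two key identities come from multiplying an element p = (x, y) of I by (a, 0):
     (x, y)(a, 0) = (x a, _)               so I1 is always closed under right products;
     (a, 0)(x, y) = (a x + \<omega>2(y) a, _)     so a x + \<omega>2(y) a \<in> I1 for every a.
   If \<omega>2 vanishes on I2, the second identity gives closure under left products, and I1,
   being the projection of a subspace, is a subspace; hence I1 is an ideal.  Conversely,
   if I1 is an ideal and \<omega>2(y) \<noteq> 0 for some (x, y) \<in> I, subtracting a x \<in> I1 leaves
   \<omega>2(y) a \<in> I1, so every a lies in I1, contradicting properness. *)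

lemma two_sided_ideal_iff_subspace:
  assumes "module sc"
  shows "two_sided_ideal sc m I \<longleftrightarrow> module.subspace sc I \<and> (\<forall>a. \<forall>x\<in>I. m a x \<in> I \<and> m x a \<in> I)"
  unfolding two_sided_ideal_def module.subspace_def[OF assms] by blast

lemma ideal_fst_image_subspace:
  assumes "module sc1" and ideal: "two_sided_ideal (prod_scale sc1 sc2) M I"
  shows "module.subspace sc1 (fst ` I)"
  unfolding module.subspace_def[OF assms(1)]
proof (intro conjI ballI allI)
  show "0 \<in> fst ` I"
    using ideal unfolding two_sided_ideal_def by force
next
  fix x y assume "x \<in> fst ` I" "y \<in> fst ` I"
  then obtain p q where "p \<in> I" "q \<in> I" "x = fst p" "y = fst q" by blast
  moreover have "p + q \<in> I"
    using ideal \<open>p \<in> I\<close> \<open>q \<in> I\<close> unfolding two_sided_ideal_def by blast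
  ultimately show "x + y \<in> fst ` I"
    by (metis fst_add image_eqI)
next
  fix c x assume "x \<in> fst ` I"
  then obtain p where "p \<in> I" "x = fst p" by blast
  moreover have "prod_scale sc1 sc2 c p \<in> I"
    using ideal \<open>p \<in> I\<close> unfolding two_sided_ideal_def by blast
  ultimately show "sc1 c x \<in> fst ` I"
    by (metis fst_conv image_eqI prod_scale_def)
qed

lemma (in vector_space) subspace_scale_cancel:
  assumes "subspace S" and "c \<noteq> 0" and "c *s x \<in> S"
  shows "x \<in> S"
proof -
  have "inverse c *s (c *s x) \<in> S"
    using assms(1,3) by (rule subspace_scale)
  then show ?thesis
    using \<open>c \<noteq> 0\<close> by simp
qed

lemma baric_algebra_weight_zero:
  assumes "baric_algebra sc m w"
  shows "w 0 = 0"
proof -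
  have additive: "\<And>x y. w (x + y) = w x + w y"
    using assms unfolding baric_algebra_def by blast
  have "w 0 + w 0 = w 0 + 0"
    using additive[of 0 0] by simp
  then show ?thesis by (rule add_left_imp_eq)
qed

lemma baric_algebra_vector_space:
  "baric_algebra sc m w \<Longrightarrow> vector_space sc"
  unfolding baric_algebra_def k_algebra_def by blast

lemma bowtie_ideal_fst_right_closed:
  assumes "module sc1" and "w2 0 = 0"
    and "two_sided_ideal (prod_scale sc1 sc2) (bowtie_mult sc1 m1 w1 sc2 m2 w2) I"
    and "x \<in> fst ` I"
  shows "m1 x a \<in> fst ` I"
proof -
  obtain p where p: "p \<in> I" "x = fst p" using assms(4) by blast
  have "bowtie_mult sc1 m1 w1 sc2 m2 w2 p (a, 0) \<in> I"
    using assms(3) p(1) unfolding two_sided_ideal_def by blast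
  moreover have "fst (bowtie_mult sc1 m1 w1 sc2 m2 w2 p (a, 0)) = m1 x a"
    using p(2) by (simp add: bowtie_mult_def assms(2) module.scale_zero_left[OF assms(1)])
  ultimately show ?thesis
    by (metis image_eqI)
qed

lemma bowtie_ideal_fst_left_product:
  assumes "two_sided_ideal (prod_scale sc1 sc2) (bowtie_mult sc1 m1 w1 sc2 m2 w2) I"
    and "p \<in> I"
  shows "m1 a (fst p) + sc1 (w2 (snd p)) a \<in> fst ` I"
proof -
  have "bowtie_mult sc1 m1 w1 sc2 m2 w2 (a, 0) p \<in> I"
    using assms unfolding two_sided_ideal_def by blast
  moreover have "fst (bowtie_mult sc1 m1 w1 sc2 m2 w2 (a, 0) p) = m1 a (fst p) + sc1 (w2 (snd p)) a"
    by (simp add: bowtie_mult_def)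
  ultimately show ?thesis
    by (metis image_eqI)
qed

lemma bowtie_ideal_fst_left_closed:
  assumes "module sc1"
    and "two_sided_ideal (prod_scale sc1 sc2) (bowtie_mult sc1 m1 w1 sc2 m2 w2) I"
    and "snd ` I \<subseteq> {y. w2 y = 0}"
    and "x \<in> fst ` I"
  shows "m1 a x \<in> fst ` I"
proof -
  obtain p where p: "p \<in> I" "x = fst p" using assms(4) by blast
  have "w2 (snd p) = 0" using assms(3) p(1) by auto
  then show ?thesis
    using bowtie_ideal_fst_left_product[OF assms(2) p(1), of a] p(2)
    by (simp add: module.scale_zero_left[OF assms(1)])
qed

lemma bowtie_ideal_fst_full:
  assumes "vector_space sc1"
    and "two_sided_ideal (prod_scale sc1 sc2) (bowtie_mult sc1 m1 w1 sc2 m2 w2) I"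
    and ideal1: "two_sided_ideal sc1 m1 (fst ` I)"
    and "p \<in> I" and "w2 (snd p) \<noteq> 0"
  shows "fst ` I = UNIV"
proof -
  interpret vector_space sc1 by fact
  have sub: "subspace (fst ` I)"
    using ideal1 by (simp add: two_sided_ideal_iff_subspace[OF module_axioms])
  have "a \<in> fst ` I" for a
  proof -
    have "m1 a (fst p) \<in> fst ` I"
      using ideal1 \<open>p \<in> I\<close> unfolding two_sided_ideal_def by blast
    moreover have "m1 a (fst p) + sc1 (w2 (snd p)) a \<in> fst ` I"
      using assms(2,4) by (rule bowtie_ideal_fst_left_product)
    ultimately have "(m1 a (fst p) + sc1 (w2 (snd p)) a) - m1 a (fst p) \<in> fst ` I"
      by (intro subspace_diff[OF sub])
    then have "sc1 (w2 (snd p)) a \<in> fst ` I" by simp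
    with sub \<open>w2 (snd p) \<noteq> 0\<close> show ?thesis
      by (rule subspace_scale_cancel)
  qed
  then show ?thesis by blast
qed

theorem proposition5p2:
  fixes sc1 :: "'k::field \<Rightarrow> 'a::ab_group_add \<Rightarrow> 'a" and m1 :: "'a \<Rightarrow> 'a \<Rightarrow> 'a" and w1 :: "'a \<Rightarrow> 'k"
    and sc2 :: "'k \<Rightarrow> 'b::ab_group_add \<Rightarrow> 'b" and m2 :: "'b \<Rightarrow> 'b \<Rightarrow> 'b" and w2 :: "'b \<Rightarrow> 'k"
    and I :: "('a \<times> 'b) set"
  assumes "baric_algebra sc1 m1 w1"
    and "baric_algebra sc2 m2 w2"
    and "two_sided_ideal (prod_scale sc1 sc2) (bowtie_mult sc1 m1 w1 sc2 m2 w2) I"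
    and "fst ` I \<noteq> UNIV"
  shows "two_sided_ideal sc1 m1 (fst ` I) \<longleftrightarrow> snd ` I \<subseteq> {x. w2 x = 0}"
proof -
  have vs1: "vector_space sc1" using assms(1) by (rule baric_algebra_vector_space)
  then have mod1: "module sc1" by (simp add: module_iff_vector_space)
  show ?thesis
  proof
    assume "two_sided_ideal sc1 m1 (fst ` I)"
    then show "snd ` I \<subseteq> {x. w2 x = 0}"
      using bowtie_ideal_fst_full[OF vs1 assms(3)] assms(4) by fastforce
  next
    assume weightless: "snd ` I \<subseteq> {x. w2 x = 0}"
    have "module.subspace sc1 (fst ` I)"
      using mod1 assms(3) by (rule ideal_fst_image_subspace)
    moreover have "m1 x a \<in> fst ` I" if "x \<in> fst ` I" for a x
      using bowtie_ideal_fst_right_closed[OF mod1 baric_algebra_weight_zero[OF assms(2)] assms(3) that] .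
    moreover have "m1 a x \<in> fst ` I" if "x \<in> fst ` I" for a x
      using bowtie_ideal_fst_left_closed[OF mod1 assms(3) weightless that] .
    ultimately show "two_sided_ideal sc1 m1 (fst ` I)"
      by (simp add: two_sided_ideal_iff_subspace[OF mod1])
  qed
qed

end
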